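(* In the two-parallel-path setting with the linear decision rule, suppose $l_v=0$ for all vertices, $m<n$, all initial pheromone levels are positive, $f_s(t)=f_s(0)+\alpha t$ and $b_d(t)=b_d(0)+\alpha t$ with $\alpha>0$ and $f_s(0),b_d(0)>0$, and the initial flows at vertices other than $s,d$ satisfy $f_v(0)\le f_s(0)$, $b_v(0)\le b_d(0)$. Let $T_1=\max_{(u,v)\in E}\log(p_{uv}(0)/(f_s(0)+b_d(0)))/\log(1/\delta)$. Then for every integer $t\ge L+\max(0,T_1)$, $$r_{\min}(t+L)\ \ge\ \left(1+\frac{\alpha(1-\delta)}{6\,(f_s(0)+b_d(0)+2\alpha L+2\alpha t)}\right)r_{\min}(t).$$
   Context: Model (linear decision rule). Directed graph $G=(V,E)$, source $s$, destination $d$, discrete time; pheromone $p_{uv}(t)$, forward flows $f_v(t)$, backward flows $b_v(t)$; leakages $l_v\in[0,1]$; decay $\delta\in(0,1)$; exogenous inputs $f_s(t),b_d(t)$. Edge flows: $f_{uv}(t)=f_u(t)p_{uv}(t)/\sum_{z:(u,z)\in E}p_{uz}(t)$, $b_{uv}(t)=b_v(t)p_{uv}(t)/\sum_{z:(z,v)\in E}p_{zv}(t)$ (at a vertex with a single outgoing, resp. incoming, edge the whole flow goes along it). Updates: $f_v(t+1)=(1-l_v)\sum_{z:(z,v)\in E}f_{zv}(t)$ for $v\neq s$, $b_u(t+1)=(1-l_u)\sum_{z:(u,z)\in E}b_{uz}(t)$ for $u\ne d$, $p_{uv}(t+1)=\delta(p_{uv}(t)+f_{uv}(t)+b_{uv}(t))$.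 Two parallel paths: $G$ is the union of directed paths $P_1,P_2$ from $s$ to $d$ sharing only $s,d$; $s_1,s_2$ are the successors of $s$ and $d_1,d_2$ the predecessors of $d$ on $P_1,P_2$; $m=\mathrm{len}(P_1)$, $n=\mathrm{len}(P_2)$ (numbers of edges), $L=\max(m,n)$. Potential: $r_{ss_1}(t)=p_{ss_1}(t)/p_{ss_2}(t)$, $r_{d_1d}(t)=p_{d_1d}(t)/p_{d_2d}(t)$, and for $t\ge L$, $r_{\min}(t)=\min\{r_{ss_1}(t-i),\,r_{d_1d}(t-i):0\le i\le L-1\}$. *)

theory Defs
  imports Complex_Main
begin

text \<open>General ant-colony (linear decision rule) dynamics on a directed graph with edge set E.
  f t v : forward flow at vertex v at time t; b t v : backward flow; p t u v : pheromone on edge (u,v).\<close>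

definition out_sum :: "('v \<times> 'v) set \<Rightarrow> ('v \<Rightarrow> 'v \<Rightarrow> real) \<Rightarrow> 'v \<Rightarrow> real" where
  "out_sum E q u = (\<Sum>z\<in>{z. (u, z) \<in> E}. q u z)"

definition in_sum :: "('v \<times> 'v) set \<Rightarrow> ('v \<Rightarrow> 'v \<Rightarrow> real) \<Rightarrow> 'v \<Rightarrow> real" where
  "in_sum E q v = (\<Sum>z\<in>{z. (z, v) \<in> E}. q z v)"

definition fwd_edge :: "('v \<times> 'v) set \<Rightarrow> (nat \<Rightarrow> 'v \<Rightarrow> real) \<Rightarrow> (nat \<Rightarrow> 'v \<Rightarrow> 'v \<Rightarrow> real)
    \<Rightarrow> nat \<Rightarrow> 'v \<Rightarrow> 'v \<Rightarrow> real" where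
  "fwd_edge E f p t u v = f t u * p t u v / out_sum E (p t) u"

definition bwd_edge :: "('v \<times> 'v) set \<Rightarrow> (nat \<Rightarrow> 'v \<Rightarrow> real) \<Rightarrow> (nat \<Rightarrow> 'v \<Rightarrow> 'v \<Rightarrow> real)
    \<Rightarrow> nat \<Rightarrow> 'v \<Rightarrow> 'v \<Rightarrow> real" where
  "bwd_edge E b p t u v = b t v * p t u v / in_sum E (p t) v"

text \<open>The update rules (the exogenous inputs f t s and b t d are left unconstrained here).\<close>
definition ant_dynamics :: "('v \<times> 'v) set \<Rightarrow> 'v \<Rightarrow> 'v \<Rightarrow> ('v \<Rightarrow> real) \<Rightarrow> real
    \<Rightarrow> (nat \<Rightarrow> 'v \<Rightarrow> real) \<Rightarrow> (nat \<Rightarrow> 'v \<Rightarrow> real) \<Rightarrow> (nat \<Rightarrow> 'v \<Rightarrow> 'v \<Rightarrow> real) \<Rightarrow> bool" where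
  "ant_dynamics E s d l \<delta> f b p \<longleftrightarrow>
    (\<forall>t.
      (\<forall>v. v \<noteq> s \<longrightarrow> f (Suc t) v = (1 - l v) * (\<Sum>z\<in>{z. (z, v) \<in> E}. fwd_edge E f p t z v)) \<and>
      (\<forall>u. u \<noteq> d \<longrightarrow> b (Suc t) u = (1 - l u) * (\<Sum>z\<in>{z. (u, z) \<in> E}. bwd_edge E b p t u z)) \<and>
      (\<forall>u v. (u, v) \<in> E \<longrightarrow>
         p (Suc t) u v = \<delta> * (p t u v + fwd_edge E f p t u v + bwd_edge E b p t u v)))"

definition path_edges :: "'v list \<Rightarrow> ('v \<times> 'v) set" where
  "path_edges P = set (zip P (tl P))"

definition two_parallel_paths :: "('v \<times> 'v) set \<Rightarrow> 'v \<Rightarrow> 'v \<Rightarrow> 'v list \<Rightarrow> 'v list \<Rightarrow> bool" where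
  "two_parallel_paths E s d P1 P2 \<longleftrightarrow>
     distinct P1 \<and> distinct P2 \<and> length P1 \<ge> 2 \<and> length P2 \<ge> 2 \<and>
     hd P1 = s \<and> last P1 = d \<and> hd P2 = s \<and> last P2 = d \<and>
     set P1 \<inter> set P2 = {s, d} \<and>
     E = path_edges P1 \<union> path_edges P2"

definition plen :: "'v list \<Rightarrow> nat" where "plen P = length P - 1"
definition succ_s :: "'v list \<Rightarrow> 'v" where "succ_s P = P ! 1"
definition pred_d :: "'v list \<Rightarrow> 'v" where "pred_d P = P ! (length P - 2)"

definition r_min :: "(nat \<Rightarrow> 'v \<Rightarrow> 'v \<Rightarrow> real) \<Rightarrow> 'v \<Rightarrow> 'v \<Rightarrow> 'v list \<Rightarrow> 'v list \<Rightarrow> nat \<Rightarrow> real" where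
  "r_min p s d P1 P2 t =
     (let L = max (plen P1) (plen P2) in
      Min ((\<lambda>i. p (t - i) s (succ_s P1) / p (t - i) s (succ_s P2)) ` {..<L} \<union>
           (\<lambda>i. p (t - i) (pred_d P1) d / p (t - i) (pred_d P2) d) ` {..<L}))"

end

(*
  At the source, the pheromone on the first edge of a path gains the proportional share of the
  forward input plus the backward flow that entered the path at the sink plen - 1 steps earlier;
  symmetrically at the sink. Since the inputs grow by alpha per step, the backward flow reaching s
  along the shorter path left d at least one step later than the one along the longer path, and
  so carries at least alpha more. Hence, if every ratio in the window defining r_min(t) is at
  least rho, the next ratios are at least rho (1 + alpha / W), where W is the pheromone at s (or d)
  plus the current inputs. Once the initial pheromone has decayed below f_s(0) + b_d(0), a
  geometric-series estimate bounds W by a multiple of the inputs divided by 1 - delta, and a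
  strong induction over the next L steps gives the improved lower bound for r_min(t + L).
*)

theory Submission
  imports Defs
begin

section \<open>Paths and their reversal\<close>

lemma path_edges_iff:
  "(a, b) \<in> path_edges P \<longleftrightarrow> (\<exists>i. Suc i < length P \<and> a = P!i \<and> b = P!Suc i)"
  unfolding path_edges_def set_zip by (force simp: nth_tl)

lemma path_edges_rev: "path_edges (rev P) = (path_edges P)\<inverse>"
proof (rule set_eqI, clarify)
  fix a b
  have "(\<exists>i. Suc i < length P \<and> a = rev P!i \<and> b = rev P!Suc i) \<longleftrightarrow>
        (\<exists>j. Suc j < length P \<and> b = P!j \<and> a = P!Suc j)"
  proof
    assume "\<exists>i. Suc i < length P \<and> a = rev P!i \<and> b = rev P!Suc i"
    then obtain i where "Suc i < length P" "a = rev P!i" "b = rev P!Suc i" by blast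
    then show "\<exists>j. Suc j < length P \<and> b = P!j \<and> a = P!Suc j"
      by (intro exI[of _ "length P - Suc (Suc i)"]) (auto simp: rev_nth Suc_diff_Suc)
  next
    assume "\<exists>j. Suc j < length P \<and> b = P!j \<and> a = P!Suc j"
    then obtain j where "Suc j < length P" "b = P!j" "a = P!Suc j" by blast
    then show "\<exists>i. Suc i < length P \<and> a = rev P!i \<and> b = rev P!Suc i"
      by (intro exI[of _ "length P - Suc (Suc j)"]) (auto simp: rev_nth Suc_diff_Suc)
  qed
  then show "((a, b) \<in> path_edges (rev P)) = ((a, b) \<in> (path_edges P)\<inverse>)"
    by (simp add: path_edges_iff)
qed

lemma path_edges_subset: "path_edges P \<subseteq> set P \<times> set P"
  by (auto simp: path_edges_iff)

lemma in_path_edges_nth_iff: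
  assumes "distinct P" "Suc i < length P"
  shows "(u, P!Suc i) \<in> path_edges P \<longleftrightarrow> u = P!i"
  using assms by (auto simp: path_edges_iff nth_eq_iff_index_eq)

lemma out_path_edges_nth_iff:
  assumes "distinct P" "Suc i < length P"
  shows "(P!i, v) \<in> path_edges P \<longleftrightarrow> v = P!Suc i"
  using assms by (auto simp: path_edges_iff nth_eq_iff_index_eq)

lemma two_parallel_paths_swap:
  "two_parallel_paths E s d P Q \<Longrightarrow> two_parallel_paths E s d Q P"
  unfolding two_parallel_paths_def by auto

lemma two_parallel_paths_rev:
  "two_parallel_paths E s d P Q \<Longrightarrow> two_parallel_paths (E\<inverse>) d s (rev P) (rev Q)"
  unfolding two_parallel_paths_def by (auto simp: hd_rev last_rev path_edges_rev)

lemma succ_s_rev: "length P \<ge> 2 \<Longrightarrow> succ_s (rev P) = pred_d P"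
  by (simp add: succ_s_def pred_d_def rev_nth numeral_2_eq_2)

lemma pred_d_rev: "length P \<ge> 2 \<Longrightarrow> pred_d (rev P) = succ_s P"
  by (simp add: succ_s_def pred_d_def rev_nth numeral_2_eq_2 Suc_diff_Suc)

lemma plen_rev [simp]: "plen (rev P) = plen P"
  by (simp add: plen_def)

locale parallel_paths =
  fixes E :: "('v \<times> 'v) set" and s d :: 'v and P Q :: "'v list"
  assumes paths: "two_parallel_paths E s d P Q"
begin

lemma distinct_path: "distinct P"
  and length_path: "2 \<le> length P"
  and edges_eq: "E = path_edges P \<union> path_edges Q"
  and paths_inter: "set P \<inter> set Q = {s, d}"
  using paths by (auto simp: two_parallel_paths_def)

lemma nth_first: "P!0 = s"
  and nth_last: "P!(length P - 1) = d"
proof -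
  have "P \<noteq> []" using length_path by auto
  then show "P!0 = s" "P!(length P - 1) = d"
    using paths by (simp_all add: two_parallel_paths_def hd_conv_nth last_conv_nth)
qed

lemma plen_pos: "0 < plen P"
  using length_path by (simp add: plen_def)

lemma nth_neq_first:
  assumes "0 < k" "k < length P"
  shows "P!k \<noteq> s"
proof -
  have "P!k = P!0 \<longleftrightarrow> k = 0"
    using assms distinct_path by (intro nth_eq_iff_index_eq) auto
  then show ?thesis using assms nth_first by simp
qed

lemma finite_edges: "finite E"
  by (simp add: edges_eq path_edges_def)

lemma path_edge_ends:
  assumes "(u, v) \<in> path_edges P"
  shows "u \<noteq> d" "v \<noteq> s"
proof -
  obtain i where i: "Suc i < length P" "u = P!i" "v = P!Suc i"
    using assms by (auto simp: path_edges_iff)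
  have "P!i \<noteq> P!(length P - 1)" "P!Suc i \<noteq> P!0"
    using i distinct_path by (subst nth_eq_iff_index_eq; auto)+
  then show "u \<noteq> d" "v \<noteq> s" using i nth_first nth_last by simp_all
qed

lemma interior_notin_other:
  assumes "0 < k" "Suc k < length P"
  shows "P!k \<notin> set Q"
proof
  assume "P!k \<in> set Q"
  moreover have "P!k \<in> set P" using assms by simp
  ultimately have "P!k \<in> {s, d}" using paths_inter by blast
  then have "P!k = P!0 \<or> P!k = P!(length P - 1)" using nth_first nth_last by simp
  moreover have "0 < length P" "k < length P" "length P - 1 < length P" using assms by auto
  ultimately show False using assms distinct_path by (auto simp: nth_eq_iff_index_eq)
qed

lemma in_neighbours_interior:
  assumes "0 < k" "Suc k < length P"
  shows "{z. (z, P!k) \<in> E} = {P!(k - 1)}"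
proof -
  have "(z, P!k) \<notin> path_edges Q" for z
    using interior_notin_other[OF assms] path_edges_subset by blast
  then show ?thesis
    using in_path_edges_nth_iff[OF distinct_path, of "k - 1"] assms by (auto simp: edges_eq)
qed

lemma out_neighbours_interior:
  assumes "0 < k" "Suc k < length P"
  shows "{z. (P!k, z) \<in> E} = {P!Suc k}"
proof -
  have "(P!k, z) \<notin> path_edges Q" for z
    using interior_notin_other[OF assms] path_edges_subset by blast
  then show ?thesis
    using out_path_edges_nth_iff[OF distinct_path, of k] assms by (auto simp: edges_eq)
qed

lemma out_path_edges_source: "(s, z) \<in> path_edges P \<longleftrightarrow> z = succ_s P"
  using out_path_edges_nth_iff[OF distinct_path, of 0] length_path nth_first
  by (simp add: succ_s_def)

lemma length_eq_2_if_succ_s_in_other: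
  assumes "succ_s P \<in> set Q"
  shows "length P = 2"
proof -
  have "P!1 \<in> set P" using length_path by simp
  moreover have "P!1 \<noteq> P!0" using length_path distinct_path by (subst nth_eq_iff_index_eq) auto
  ultimately have "P!1 = P!(length P - 1)"
    using assms paths_inter nth_first nth_last by (auto simp: succ_s_def)
  then have "1 = length P - 1" using length_path distinct_path by (subst (asm) nth_eq_iff_index_eq) auto
  then show ?thesis using length_path by simp
qed

lemma in_neighbour_unique_on_path:
  assumes "v \<in> set P - {s, d}"
  shows "\<exists>u. {z. (z, v) \<in> E} = {u}"
proof -
  obtain k where k: "k < length P" "v = P!k" using assms by (auto simp: in_set_conv_nth)
  have "v \<noteq> P!0" "v \<noteq> P!(length P - 1)" using assms nth_first nth_last by auto
  then have "k \<noteq> 0" "k \<noteq> length P - 1" using k by metis+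
  then have "0 < k" "Suc k < length P" using k by linarith+
  then show ?thesis using in_neighbours_interior k by blast
qed

end

sublocale parallel_paths \<subseteq> swapped: parallel_paths E s d Q P
  using paths by unfold_locales (rule two_parallel_paths_swap)

context parallel_paths
begin

lemma edge_ends:
  assumes "(u, v) \<in> E"
  shows "u \<in> set P \<union> set Q - {d}" "v \<in> set P \<union> set Q - {s}"
proof -
  have "(u, v) \<in> path_edges P \<or> (u, v) \<in> path_edges Q" using assms edges_eq by blast
  then have "u \<in> set P \<union> set Q \<and> v \<in> set P \<union> set Q \<and> u \<noteq> d \<and> v \<noteq> s"
    using path_edges_subset path_edge_ends swapped.path_edge_ends by blast
  then show "u \<in> set P \<union> set Q - {d}" "v \<in> set P \<union> set Q - {s}" by simp_all
qed

lemma out_neighbours_source: "{z. (s, z) \<in> E} = {succ_s P, succ_s Q}"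
  using out_path_edges_source swapped.out_path_edges_source by (auto simp: edges_eq)

lemma succ_s_neq:
  assumes "length P \<noteq> length Q"
  shows "succ_s P \<noteq> succ_s Q"
proof
  assume eq: "succ_s P = succ_s Q"
  have "succ_s P \<in> set P" "succ_s Q \<in> set Q"
    using length_path swapped.length_path by (simp_all add: succ_s_def)
  then have "length P = 2" "length Q = 2"
    using eq length_eq_2_if_succ_s_in_other swapped.length_eq_2_if_succ_s_in_other by simp_all
  with assms show False by simp
qed

lemma in_neighbour_unique:
  assumes "v \<in> set P \<union> set Q - {s, d}"
  obtains u where "{z. (z, v) \<in> E} = {u}"
proof -
  have "v \<in> set P - {s, d} \<or> v \<in> set Q - {s, d}" using assms by blast
  then obtain u where "{z. (z, v) \<in> E} = {u}"
    using in_neighbour_unique_on_path swapped.in_neighbour_unique_on_path by blast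
  then show ?thesis by (rule that)
qed

end

section \<open>Reversal of the dynamics\<close>

lemma out_sum_converse: "out_sum (E\<inverse>) (\<lambda>u v. q v u) u = in_sum E q u"
  by (simp add: out_sum_def in_sum_def)

lemma in_sum_converse: "in_sum (E\<inverse>) (\<lambda>u v. q v u) v = out_sum E q v"
  by (simp add: out_sum_def in_sum_def)

lemma fwd_edge_converse: "fwd_edge (E\<inverse>) b (\<lambda>t u v. p t v u) t u v = bwd_edge E b p t v u"
  by (simp add: fwd_edge_def bwd_edge_def out_sum_converse)

lemma bwd_edge_converse: "bwd_edge (E\<inverse>) f (\<lambda>t u v. p t v u) t u v = fwd_edge E f p t v u"
  by (simp add: fwd_edge_def bwd_edge_def in_sum_converse)

lemma ant_dynamics_converse:
  "ant_dynamics E s d l \<delta> f b p \<Longrightarrow> ant_dynamics (E\<inverse>) d s l \<delta> b f (\<lambda>t u v. p t v u)"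
  by (simp add: ant_dynamics_def fwd_edge_converse bwd_edge_converse add_ac)

lemma fwd_edge_bounds:
  assumes "finite E" "(u, v) \<in> E" "\<And>u v. (u, v) \<in> E \<Longrightarrow> 0 < p t u v" "0 \<le> f t u"
  shows "0 \<le> fwd_edge E f p t u v" "fwd_edge E f p t u v \<le> f t u"
proof -
  have fin: "finite {z. (u, z) \<in> E}"
    using finite_subset[of "{z. (u, z) \<in> E}" "snd ` E"] assms(1) by force
  have "p t u v \<le> out_sum E (p t) u"
    unfolding out_sum_def using fin assms(2,3) by (intro member_le_sum) (auto intro: less_imp_le)
  moreover have "0 < p t u v" using assms(3)[OF assms(2)] .
  ultimately show "0 \<le> fwd_edge E f p t u v" "fwd_edge E f p t u v \<le> f t u"
    unfolding fwd_edge_def using assms(4)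
    by (auto simp: divide_le_eq mult_left_mono)
qed

lemma bwd_edge_bounds:
  assumes "finite E" "(u, v) \<in> E" "\<And>u v. (u, v) \<in> E \<Longrightarrow> 0 < p t u v" "0 \<le> b t v"
  shows "0 \<le> bwd_edge E b p t u v" "bwd_edge E b p t u v \<le> b t v"
  using fwd_edge_bounds[of "E\<inverse>" v u "\<lambda>t u v. p t v u" t b] assms
  by (simp_all add: fwd_edge_converse)

lemma fwd_edge_single:
  assumes "{z. (u, z) \<in> E} = {w}" "0 < p t u w"
  shows "fwd_edge E f p t u w = f t u"
  using assms by (simp add: fwd_edge_def out_sum_def)

lemma decay_recurrence_bound:
  fixes S W :: "nat \<Rightarrow> real"
  assumes "0 < \<delta>" "\<delta> < 1"
    and step: "\<And>t. S (Suc t) \<le> \<delta> * (S t + W t)"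
    and W: "\<And>t. 0 \<le> W t" "\<And>t. W t \<le> W (Suc t)"
  shows "S t \<le> \<delta>^t * S 0 + W t / (1 - \<delta>)"
proof (induction t)
  case (Suc t)
  have "S (Suc t) \<le> \<delta> * (\<delta>^t * S 0 + W t / (1 - \<delta>) + W t)"
    using step[of t] Suc.IH assms(1) by (smt (verit) mult_left_mono)
  also have "\<dots> = \<delta>^Suc t * S 0 + \<delta> * (2 - \<delta>) * W t / (1 - \<delta>)"
    using assms(2) by (simp add: field_simps)
  also have "\<delta> * (2 - \<delta>) * W t / (1 - \<delta>) \<le> W (Suc t) / (1 - \<delta>)"
  proof -
    have "\<delta> * (2 - \<delta>) * W t = W t - (1 - \<delta>)^2 * W t" by (simp add: power2_eq_square algebra_simps)
    moreover have "0 \<le> (1 - \<delta>)^2 * W t" using W(1)[of t] by simp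
    ultimately have "\<delta> * (2 - \<delta>) * W t \<le> W t" by linarith
    then have "\<delta> * (2 - \<delta>) * W t \<le> W (Suc t)" using W(2)[of t] by linarith
    then show ?thesis using assms(2) by (simp add: divide_right_mono)
  qed
  finally show ?case by simp
qed (use W(1)[of 0] assms(2) in simp)

text \<open>Here x, x' are the pheromone levels on the first edges of the two paths, F is the forward
  input split between them, and y, y' (resp. z, z') are the levels on the last edges at the earlier
  time when the backward flow B1 (resp. B2) now arriving along the first (resp. second) path
  left the sink.\<close>

lemma share_ratio_gain:
  fixes x x' y y' z z' F B B1 B2 \<rho> \<alpha> :: real
  assumes pos: "0 < x" "0 < x'" "0 < y" "0 < y'" "0 < z" "0 < z'" "0 < \<rho>" "0 \<le> F" "0 \<le> B2" "0 \<le> \<alpha>"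
    and ratios: "\<rho> * x' \<le> x" "\<rho> * y' \<le> y" "\<rho> * z' \<le> z"
    and B: "B2 + \<alpha> \<le> B1" "B1 \<le> B"
  shows "\<rho> * (1 + \<alpha> / (x + x' + F + B)) * (x' + F * x' / (x + x') + B2 * z' / (z + z'))
    \<le> x + F * x / (x + x') + B1 * y / (y + y')"
proof -
  define D where "D = x' + F * x' / (x + x') + B2 * z' / (z + z')"
  define W where "W = x + x' + F + B"
  have share_lower: "\<rho> / (1 + \<rho>) \<le> y / (y + y')"
    and share_upper: "z' / (z + z') \<le> 1 / (1 + \<rho>)" "x' / (x + x') \<le> 1 / (1 + \<rho>)"
    using pos ratios by (simp_all add: field_simps)
  have "\<rho> * (F * x' / (x + x')) \<le> F * x / (x + x')"
    using pos ratios by (simp add: divide_right_mono mult_left_mono mult.left_commute)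
  moreover have "\<rho> * (B2 * z' / (z + z')) + \<rho> * \<alpha> / (1 + \<rho>) \<le> B1 * y / (y + y')"
  proof -
    have "\<rho> * (B2 * z' / (z + z')) \<le> \<rho> * (B2 / (1 + \<rho>))"
      using mult_left_mono[OF mult_left_mono[OF share_upper(1) pos(9)] less_imp_le[OF pos(7)]]
      by simp
    moreover have "(B2 + \<alpha>) * (\<rho> / (1 + \<rho>)) \<le> B1 * (y / (y + y'))"
      using B pos share_lower by (intro mult_mono) auto
    ultimately show ?thesis by (simp add: algebra_simps add_divide_distrib)
  qed
  ultimately have gain: "\<rho> * D + \<rho> * \<alpha> / (1 + \<rho>) \<le> x + F * x / (x + x') + B1 * y / (y + y')"
    using ratios(1) unfolding D_def by (simp add: algebra_simps)
  have "D \<le> W / (1 + \<rho>)"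
  proof -
    have "x' \<le> (x + x') / (1 + \<rho>)" "B2 \<le> B" using pos ratios B by (simp_all add: field_simps)
    moreover have "F * x' / (x + x') \<le> F / (1 + \<rho>)"
      using mult_left_mono[OF share_upper(2) pos(8)] by simp
    moreover have "B2 * z' / (z + z') \<le> B / (1 + \<rho>)"
      using mult_left_mono[OF share_upper(1) pos(9)] \<open>B2 \<le> B\<close> pos
      by (simp add: divide_right_mono order_trans)
    ultimately show ?thesis unfolding D_def W_def by (simp add: add_divide_distrib)
  qed
  moreover have "0 < W" "0 \<le> D" using pos B unfolding W_def D_def by simp_all
  ultimately have "D / W \<le> 1 / (1 + \<rho>)" using pos by (simp add: field_simps)
  then have "\<rho> * \<alpha> * (D / W) \<le> \<rho> * \<alpha> * (1 / (1 + \<rho>))"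
    using pos by (intro mult_left_mono) simp_all
  then have "\<rho> * \<alpha> * D / W \<le> \<rho> * \<alpha> / (1 + \<rho>)" by simp
  then show ?thesis using gain \<open>0 < W\<close> unfolding D_def[symmetric] W_def[symmetric]
    by (simp add: algebra_simps)
qed

lemma window_induct:
  fixes t n :: nat
  assumes base: "\<And>j. t - n < j \<Longrightarrow> j \<le> t \<Longrightarrow> A j"
    and step: "\<And>\<tau>. t \<le> \<tau> \<Longrightarrow> \<tau> < t + n \<Longrightarrow> (\<And>j. t - n < j \<Longrightarrow> j \<le> \<tau> \<Longrightarrow> A j) \<Longrightarrow> B (Suc \<tau>)"
    and weaken: "\<And>j. B j \<Longrightarrow> A j"
  shows "t < j \<Longrightarrow> j \<le> t + n \<Longrightarrow> B j"
proof (induction j rule: less_induct)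
  case (less j)
  then obtain \<tau> where \<tau>: "j = Suc \<tau>" "t \<le> \<tau>" "\<tau> < t + n" by (cases j) auto
  have "A i" if "t - n < i" "i \<le> \<tau>" for i
    using base[OF that(1)] less.IH[of i] weaken \<tau> that by (cases "i \<le> t") auto
  then show ?case using step[OF \<tau>(2,3)] \<tau>(1) by blast
qed

lemma decayed_below:
  fixes \<delta> a c :: real
  assumes "0 < \<delta>" "\<delta> < 1" "0 < a" "0 < c" "ln (a / c) / ln (1 / \<delta>) \<le> real t"
  shows "\<delta>^t * a \<le> c"
proof -
  have "0 < ln (1 / \<delta>)" using assms(1,2) by simp
  then have "ln (a / c) \<le> ln ((1 / \<delta>)^t)"
    using assms by (simp add: divide_le_eq ln_realpow mult.commute)
  then have "a / c \<le> (1 / \<delta>)^t" using assms by simp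
  then show ?thesis using assms(1,4) by (simp add: field_simps power_one_over)
qed

section \<open>The colony on two parallel paths\<close>

locale ant_colony = parallel_paths E s d P Q
  for E :: "('v \<times> 'v) set" and s d P Q +
  fixes \<delta> \<alpha> :: real and f b :: "nat \<Rightarrow> 'v \<Rightarrow> real" and p :: "nat \<Rightarrow> 'v \<Rightarrow> 'v \<Rightarrow> real"
  assumes dynamics: "ant_dynamics E s d (\<lambda>_. 0) \<delta> f b p"
    and decay: "0 < \<delta>" "\<delta> < 1"
    and rate: "0 < \<alpha>"
    and pheromone_init: "\<And>u v. (u, v) \<in> E \<Longrightarrow> 0 < p 0 u v"
    and source_init: "0 < f 0 s" and sink_init: "0 < b 0 d"
    and source_input: "\<And>t. f t s = f 0 s + \<alpha> * real t"
    and sink_input: "\<And>t. b t d = b 0 d + \<alpha> * real t"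
    and fwd_init: "\<And>v. v \<in> set P \<union> set Q - {s, d} \<Longrightarrow> 0 \<le> f 0 v \<and> f 0 v \<le> f 0 s"
    and bwd_init: "\<And>v. v \<in> set P \<union> set Q - {s, d} \<Longrightarrow> 0 \<le> b 0 v \<and> b 0 v \<le> b 0 d"
    and lengths_neq: "length P \<noteq> length Q"

sublocale ant_colony \<subseteq> swapped: ant_colony E s d Q P
  by unfold_locales
    (rule dynamics decay rate pheromone_init source_init sink_init source_input sink_input
      | simp add: Un_commute fwd_init bwd_init lengths_neq[symmetric])+

context ant_colony
begin

text \<open>Reversing every edge exchanges s with d and forward with backward flows. Each sink-side
  fact below is obtained from its source-side counterpart through this interpretation.\<close>

lemma reversed: "ant_colony (E\<inverse>) d s (rev P) (rev Q) \<delta> \<alpha> b f (\<lambda>t u v. p t v u)"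
proof -
  interpret rev: parallel_paths "E\<inverse>" d s "rev P" "rev Q"
    using paths by unfold_locales (rule two_parallel_paths_rev)
  show ?thesis
    by unfold_locales
      (rule ant_dynamics_converse[OF dynamics] decay rate source_init sink_init source_input
        sink_input | simp add: pheromone_init fwd_init bwd_init insert_commute lengths_neq)+
qed

lemma fwd_flow_step: "v \<noteq> s \<Longrightarrow> f (Suc t) v = (\<Sum>z\<in>{z. (z, v) \<in> E}. fwd_edge E f p t z v)"
  and bwd_flow_step: "u \<noteq> d \<Longrightarrow> b (Suc t) u = (\<Sum>z\<in>{z. (u, z) \<in> E}. bwd_edge E b p t u z)"
  and pheromone_step: "(u, v) \<in> E \<Longrightarrow>
    p (Suc t) u v = \<delta> * (p t u v + fwd_edge E f p t u v + bwd_edge E b p t u v)"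
  using dynamics by (simp_all add: ant_dynamics_def)

lemma source_input_pos: "0 < f t s"
  and sink_input_pos: "0 < b t d"
  using source_input[of t] sink_input[of t] source_init sink_init rate
  by (simp_all add: add_pos_nonneg)

lemma input_mono: "t \<le> t' \<Longrightarrow> f t s \<le> f t' s" "t \<le> t' \<Longrightarrow> b t d \<le> b t' d"
  using source_input[of t] source_input[of t'] sink_input[of t] sink_input[of t'] rate
  by simp_all

lemma nonneg_invariant:
  "(\<forall>u v. (u, v) \<in> E \<longrightarrow> 0 < p t u v) \<and> (\<forall>v\<in>set P \<union> set Q - {d}. 0 \<le> f t v)
   \<and> (\<forall>v\<in>set P \<union> set Q - {s}. 0 \<le> b t v)"
proof (induction t)
  case 0
  then show ?case
    using pheromone_init fwd_init bwd_init source_init sink_init by fastforce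
next
  case (Suc t)
  then have pos: "\<And>u v. (u, v) \<in> E \<Longrightarrow> 0 < p t u v" by blast
  have fwd: "0 \<le> fwd_edge E f p t u v" and bwd: "0 \<le> bwd_edge E b p t u v" if "(u, v) \<in> E" for u v
    using fwd_edge_bounds(1)[of E u v p t f, OF finite_edges that pos]
      bwd_edge_bounds(1)[of E u v p t b, OF finite_edges that pos] Suc edge_ends[OF that] by blast+
  have "0 < p (Suc t) u v" if "(u, v) \<in> E" for u v
    using pheromone_step[OF that] pos[OF that] fwd[OF that] bwd[OF that] decay by simp
  moreover have "0 \<le> f (Suc t) v" if "v \<noteq> d" for v
    using fwd_flow_step[of v t] source_input_pos[of "Suc t"] fwd by (cases "v = s") (auto intro: sum_nonneg)
  moreover have "0 \<le> b (Suc t) v" if "v \<noteq> s" for v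
    using bwd_flow_step[of v t] sink_input_pos[of "Suc t"] bwd by (cases "v = d") (auto intro: sum_nonneg)
  ultimately show ?case by blast
qed

lemma pheromone_pos: "(u, v) \<in> E \<Longrightarrow> 0 < p t u v"
  and fwd_flow_nonneg: "v \<in> set P \<union> set Q - {d} \<Longrightarrow> 0 \<le> f t v"
  and bwd_flow_nonneg: "v \<in> set P \<union> set Q - {s} \<Longrightarrow> 0 \<le> b t v"
  using nonneg_invariant by blast+

lemma fwd_flow_le_source: "v \<in> set P \<union> set Q - {d} \<Longrightarrow> f t v \<le> f t s"
proof (induction t arbitrary: v)
  case 0
  then show ?case using fwd_init by (cases "v = s") auto
next
  case (Suc t)
  show ?case
  proof (cases "v = s")
    case False
    then obtain u where u: "{z. (z, v) \<in> E} = {u}"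
      using Suc.prems in_neighbour_unique by blast
    then have e: "(u, v) \<in> E" by blast
    have "f (Suc t) v = fwd_edge E f p t u v" using fwd_flow_step[OF False] u by simp
    also have "\<dots> \<le> f t u"
      using fwd_edge_bounds(2)[of E u v p t f, OF finite_edges e pheromone_pos fwd_flow_nonneg]
        edge_ends[OF e] by blast
    also have "\<dots> \<le> f t s" using Suc.IH edge_ends[OF e] by blast
    also have "\<dots> \<le> f (Suc t) s" by (rule input_mono) simp
    finally show ?thesis .
  qed simp
qed

lemma source_edge: "(s, succ_s P) \<in> E"
  using out_neighbours_source by blast

lemma out_sum_source: "out_sum E (p t) s = p t s (succ_s P) + p t s (succ_s Q)"
  using succ_s_neq[OF lengths_neq] by (simp add: out_sum_def out_neighbours_source)

lemma fwd_flow_along_path: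
  assumes "1 \<le> k" "k < plen P"
  shows "f (\<tau> + k) (P!k) = fwd_edge E f p \<tau> s (succ_s P)"
  using assms
proof (induction k rule: nat_induct_at_least)
  case base
  have "P!1 \<noteq> s" using nth_neq_first length_path by simp
  moreover have "{z. (z, P!1) \<in> E} = {s}"
    using in_neighbours_interior[of 1] base nth_first by (simp add: plen_def)
  ultimately show ?case using fwd_flow_step[of "P!1" \<tau>] by (simp add: succ_s_def)
next
  case (Suc k)
  have "P!Suc k \<noteq> s" using nth_neq_first Suc by (simp add: plen_def)
  moreover have "{z. (z, P!Suc k) \<in> E} = {P!k}"
    using in_neighbours_interior[of "Suc k"] Suc by (simp add: plen_def)
  ultimately have "f (\<tau> + Suc k) (P!Suc k) = fwd_edge E f p (\<tau> + k) (P!k) (P!Suc k)"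
    using fwd_flow_step[of "P!Suc k" "\<tau> + k"] by simp
  also have "\<dots> = f (\<tau> + k) (P!k)"
  proof -
    have "{z. (P!k, z) \<in> E} = {P!Suc k}" using Suc out_neighbours_interior[of k] by (simp add: plen_def)
    then show ?thesis using pheromone_pos by (blast intro: fwd_edge_single)
  qed
  finally show ?case using Suc by simp
qed

lemma fwd_arrival:
  "fwd_edge E f p (\<tau> + (plen P - 1)) (pred_d P) d = fwd_edge E f p \<tau> s (succ_s P)"
proof (cases "plen P = 1")
  case True
  then show ?thesis using nth_first nth_last by (simp add: plen_def pred_d_def succ_s_def numeral_2_eq_2)
next
  case False
  define j where "j = plen P - 1"
  have j: "0 < j" "Suc j < length P" "Suc j = length P - 1" "1 \<le> j" "j < plen P"
    using False length_path by (auto simp: j_def plen_def)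
  have "{z. (P!j, z) \<in> E} = {P!Suc j}" using out_neighbours_interior j(1,2) .
  then have "{z. (P!j, z) \<in> E} = {d}" using nth_last j(3) by simp
  then have "fwd_edge E f p (\<tau> + j) (P!j) d = f (\<tau> + j) (P!j)"
    using pheromone_pos by (blast intro: fwd_edge_single)
  moreover have "pred_d P = P!j" by (simp add: pred_d_def j_def plen_def numeral_2_eq_2)
  ultimately have "fwd_edge E f p (\<tau> + j) (pred_d P) d = f (\<tau> + j) (P!j)" by simp
  also have "\<dots> = fwd_edge E f p \<tau> s (succ_s P)" using fwd_flow_along_path j(4,5) .
  finally show ?thesis unfolding j_def .
qed

end

context ant_colony
begin

interpretation rev: ant_colony "E\<inverse>" d s "rev P" "rev Q" \<delta> \<alpha> b f "\<lambda>t u v. p t v u"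
  by (fact reversed)

lemma sink_edge: "(pred_d P, d) \<in> E"
  using rev.source_edge length_path by (simp add: succ_s_rev)

lemma in_sum_sink: "in_sum E (p t) d = p t (pred_d P) d + p t (pred_d Q) d"
  using rev.out_sum_source[of t] length_path swapped.length_path
  by (simp add: out_sum_converse succ_s_rev)

lemma bwd_flow_le_sink: "v \<in> set P \<union> set Q - {s} \<Longrightarrow> b t v \<le> b t d"
  using rev.fwd_flow_le_source by simp

lemma bwd_arrival:
  "bwd_edge E b p (\<tau> + (plen P - 1)) s (succ_s P) = bwd_edge E b p \<tau> (pred_d P) d"
  using rev.fwd_arrival[of \<tau>] length_path
  by (simp add: fwd_edge_converse succ_s_rev pred_d_rev)

end

context ant_colony
begin

lemma source_pheromone_step:
  assumes "plen P - 1 \<le> \<tau>"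
  shows "p (Suc \<tau>) s (succ_s P) = \<delta> * (p \<tau> s (succ_s P)
      + f \<tau> s * p \<tau> s (succ_s P) / out_sum E (p \<tau>) s
      + b (\<tau> - (plen P - 1)) d * p (\<tau> - (plen P - 1)) (pred_d P) d / in_sum E (p (\<tau> - (plen P - 1))) d)"
proof -
  have "bwd_edge E b p \<tau> s (succ_s P) = bwd_edge E b p (\<tau> - (plen P - 1)) (pred_d P) d"
    using bwd_arrival[of "\<tau> - (plen P - 1)"] assms by simp
  then show ?thesis using pheromone_step[OF source_edge] by (simp add: fwd_edge_def bwd_edge_def)
qed

lemma out_sum_source_step: "out_sum E (p (Suc t)) s \<le> \<delta> * (out_sum E (p t) s + 2 * (f t s + b t d))"
proof -
  have bwd_le: "bwd_edge E b p t s z \<le> b t d" if "(s, z) \<in> E" for z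
  proof -
    have "z \<in> set P \<union> set Q - {s}" using edge_ends[OF that] by blast
    then show ?thesis
      using bwd_edge_bounds(2)[of E s z p t b, OF finite_edges that pheromone_pos[where t = t]]
        bwd_flow_nonneg[of z t] bwd_flow_le_sink[of z t] by linarith
  qed
  have "0 < p t s (succ_s P) + p t s (succ_s Q)"
    using pheromone_pos[OF source_edge] pheromone_pos[OF swapped.source_edge] by (simp add: add_pos_pos)
  then have fwd_sum: "fwd_edge E f p t s (succ_s P) + fwd_edge E f p t s (succ_s Q) = f t s"
    by (simp add: fwd_edge_def out_sum_source add_divide_distrib[symmetric] ring_distribs[symmetric])
  have "out_sum E (p (Suc t)) s = \<delta> * (out_sum E (p t) s
      + (fwd_edge E f p t s (succ_s P) + fwd_edge E f p t s (succ_s Q))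
      + bwd_edge E b p t s (succ_s P) + bwd_edge E b p t s (succ_s Q))"
    using pheromone_step[OF source_edge] pheromone_step[OF swapped.source_edge]
    by (simp add: out_sum_source algebra_simps)
  also have "\<dots> = \<delta> * (out_sum E (p t) s + f t s
      + bwd_edge E b p t s (succ_s P) + bwd_edge E b p t s (succ_s Q))"
    by (simp only: fwd_sum)
  also have "\<dots> \<le> \<delta> * (out_sum E (p t) s + 2 * (f t s + b t d))"
    using bwd_le[OF source_edge] bwd_le[OF swapped.source_edge] source_input_pos[of t] decay
    by (intro mult_left_mono) auto
  finally show ?thesis .
qed

lemma out_sum_source_bound:
  "out_sum E (p t) s \<le> \<delta>^t * out_sum E (p 0) s + 2 * (f t s + b t d) / (1 - \<delta>)"
  by (rule decay_recurrence_bound[where S = "\<lambda>t. out_sum E (p t) s"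
        and W = "\<lambda>t. 2 * (f t s + b t d)", OF decay out_sum_source_step])
    (simp_all add: add_mono input_mono less_imp_le source_input_pos sink_input_pos)

lemma source_load_bound:
  assumes "\<And>u v. (u, v) \<in> E \<Longrightarrow> \<delta>^t * p 0 u v \<le> f 0 s + b 0 d"
  shows "out_sum E (p t) s + f t s + b t d \<le> 5 * (f t s + b t d) / (1 - \<delta>)"
proof -
  have "\<delta>^t * out_sum E (p 0) s \<le> 2 * (f 0 s + b 0 d)"
    using assms[OF source_edge] assms[OF swapped.source_edge] by (simp add: out_sum_source distrib_left)
  also have "\<dots> \<le> 2 * (f t s + b t d)" using input_mono[of 0 t] by simp
  finally have "out_sum E (p t) s + f t s + b t d \<le> 3 * (f t s + b t d) + 2 * (f t s + b t d) / (1 - \<delta>)"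
    using out_sum_source_bound[of t] by simp
  also have "3 * (f t s + b t d) \<le> 3 * (f t s + b t d) / (1 - \<delta>)"
    using decay source_input_pos[of t] sink_input_pos[of t] by (simp add: le_divide_eq)
  finally show ?thesis by (simp add: add_divide_distrib[symmetric])
qed

end

section \<open>Growth of the potential\<close>

context ant_colony
begin

lemma source_ratio_gain:
  assumes "plen P < plen Q" "plen Q - 1 \<le> \<tau>" "0 < \<rho>"
    and now: "\<rho> * p \<tau> s (succ_s Q) \<le> p \<tau> s (succ_s P)"
    and delayed: "\<And>\<sigma>. \<sigma> \<in> {\<tau> - (plen P - 1), \<tau> - (plen Q - 1)} \<Longrightarrow>
      \<rho> * p \<sigma> (pred_d Q) d \<le> p \<sigma> (pred_d P) d"
  shows "\<rho> * (1 + \<alpha> / (out_sum E (p \<tau>) s + f \<tau> s + b \<tau> d)) * p (Suc \<tau>) s (succ_s Q)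
    \<le> p (Suc \<tau>) s (succ_s P)"
proof -
  define \<sigma>P where "\<sigma>P = \<tau> - (plen P - 1)"
  define \<sigma>Q where "\<sigma>Q = \<tau> - (plen Q - 1)"
  define A where "A = p \<tau> s (succ_s Q) + f \<tau> s * p \<tau> s (succ_s Q) / out_sum E (p \<tau>) s
    + b \<sigma>Q d * p \<sigma>Q (pred_d Q) d / in_sum E (p \<sigma>Q) d"
  define B where "B = p \<tau> s (succ_s P) + f \<tau> s * p \<tau> s (succ_s P) / out_sum E (p \<tau>) s
    + b \<sigma>P d * p \<sigma>P (pred_d P) d / in_sum E (p \<sigma>P) d"
  have "Suc \<sigma>Q \<le> \<sigma>P" "\<sigma>P \<le> \<tau>" using assms(1,2) plen_pos by (auto simp: \<sigma>P_def \<sigma>Q_def)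
  then have "\<alpha> * (real \<sigma>Q + 1) \<le> \<alpha> * real \<sigma>P" "\<alpha> * real \<sigma>P \<le> \<alpha> * real \<tau>"
    using rate by (intro mult_left_mono; simp)+
  then have arrivals: "b \<sigma>Q d + \<alpha> \<le> b \<sigma>P d" "b \<sigma>P d \<le> b \<tau> d"
    using sink_input[of \<sigma>P] sink_input[of \<sigma>Q] sink_input[of \<tau>] by (simp_all add: distrib_left)
  have "\<rho> * (1 + \<alpha> / (out_sum E (p \<tau>) s + f \<tau> s + b \<tau> d)) * A \<le> B"
    unfolding A_def B_def out_sum_source in_sum_sink
    using share_ratio_gain[OF pheromone_pos[OF source_edge] pheromone_pos[OF swapped.source_edge]
        pheromone_pos[OF sink_edge] pheromone_pos[OF swapped.sink_edge]
        pheromone_pos[OF sink_edge] pheromone_pos[OF swapped.sink_edge]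
        \<open>0 < \<rho>\<close> less_imp_le[OF source_input_pos] less_imp_le[OF sink_input_pos] less_imp_le[OF rate]
        now delayed delayed arrivals]
    by (simp add: \<sigma>P_def \<sigma>Q_def add_ac)
  moreover have "p (Suc \<tau>) s (succ_s P) = \<delta> * B" "p (Suc \<tau>) s (succ_s Q) = \<delta> * A"
    using source_pheromone_step swapped.source_pheromone_step[OF assms(2)] assms(1,2)
    by (simp_all add: A_def B_def \<sigma>P_def \<sigma>Q_def)
  ultimately show ?thesis using decay by (simp add: mult.left_commute[of _ \<delta>])
qed

end

context ant_colony
begin

interpretation rev: ant_colony "E\<inverse>" d s "rev P" "rev Q" \<delta> \<alpha> b f "\<lambda>t u v. p t v u"
  by (fact reversed)

lemma sink_load_bound:
  assumes "\<And>u v. (u, v) \<in> E \<Longrightarrow> \<delta>^t * p 0 u v \<le> f 0 s + b 0 d"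
  shows "in_sum E (p t) d + f t s + b t d \<le> 5 * (f t s + b t d) / (1 - \<delta>)"
  using rev.source_load_bound[of t] assms by (simp add: out_sum_converse add_ac)

lemma sink_ratio_gain:
  assumes "plen P < plen Q" "plen Q - 1 \<le> \<tau>" "0 < \<rho>"
    and "\<rho> * p \<tau> (pred_d Q) d \<le> p \<tau> (pred_d P) d"
    and "\<And>\<sigma>. \<sigma> \<in> {\<tau> - (plen P - 1), \<tau> - (plen Q - 1)} \<Longrightarrow>
      \<rho> * p \<sigma> s (succ_s Q) \<le> p \<sigma> s (succ_s P)"
  shows "\<rho> * (1 + \<alpha> / (in_sum E (p \<tau>) d + f \<tau> s + b \<tau> d)) * p (Suc \<tau>) (pred_d Q) d
    \<le> p (Suc \<tau>) (pred_d P) d"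
  using rev.source_ratio_gain[of \<tau> \<rho>] assms length_path swapped.length_path
  by (simp add: succ_s_rev pred_d_rev out_sum_converse add_ac)

definition ratio_at_least :: "real \<Rightarrow> nat \<Rightarrow> bool" where
  "ratio_at_least \<rho> t \<longleftrightarrow>
     \<rho> * p t s (succ_s Q) \<le> p t s (succ_s P) \<and> \<rho> * p t (pred_d Q) d \<le> p t (pred_d P) d"

lemma ratio_at_least_mono:
  assumes "ratio_at_least \<rho> t" "\<rho>' \<le> \<rho>"
  shows "ratio_at_least \<rho>' t"
proof -
  have "\<rho>' * p t s (succ_s Q) \<le> \<rho> * p t s (succ_s Q)" "\<rho>' * p t (pred_d Q) d \<le> \<rho> * p t (pred_d Q) d"
    using assms(2) pheromone_pos[OF swapped.source_edge] pheromone_pos[OF swapped.sink_edge]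
    by (simp_all add: mult_right_mono)
  then show ?thesis using assms(1) unfolding ratio_at_least_def by linarith
qed

lemma le_r_min_iff:
  assumes "plen P \<le> plen Q" "plen Q \<le> \<tau>"
  shows "c \<le> r_min p s d P Q \<tau> \<longleftrightarrow> (\<forall>j. \<tau> - plen Q < j \<and> j \<le> \<tau> \<longrightarrow> ratio_at_least c j)"
proof -
  have "c \<le> r_min p s d P Q \<tau> \<longleftrightarrow> (\<forall>i<plen Q.
      c \<le> p (\<tau> - i) s (succ_s P) / p (\<tau> - i) s (succ_s Q) \<and>
      c \<le> p (\<tau> - i) (pred_d P) d / p (\<tau> - i) (pred_d Q) d)"
    unfolding r_min_def Let_def max_absorb2[OF assms(1)] using swapped.plen_pos
    by (subst Min_ge_iff) auto
  also have "\<dots> \<longleftrightarrow> (\<forall>i<plen Q. ratio_at_least c (\<tau> - i))"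
    using pheromone_pos[OF swapped.source_edge] pheromone_pos[OF swapped.sink_edge]
    by (simp add: ratio_at_least_def pos_le_divide_eq)
  also have "\<dots> \<longleftrightarrow> (\<forall>j. \<tau> - plen Q < j \<and> j \<le> \<tau> \<longrightarrow> ratio_at_least c j)"
  proof
    assume "\<forall>i<plen Q. ratio_at_least c (\<tau> - i)"
    show "\<forall>j. \<tau> - plen Q < j \<and> j \<le> \<tau> \<longrightarrow> ratio_at_least c j"
    proof (intro allI impI)
      fix j assume "\<tau> - plen Q < j \<and> j \<le> \<tau>"
      then have "\<tau> - j < plen Q" "\<tau> - (\<tau> - j) = j" by auto
      then show "ratio_at_least c j" using \<open>\<forall>i<plen Q. ratio_at_least c (\<tau> - i)\<close> by metis
    qed
  next
    assume "\<forall>j. \<tau> - plen Q < j \<and> j \<le> \<tau> \<longrightarrow> ratio_at_least c j"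
    then show "\<forall>i<plen Q. ratio_at_least c (\<tau> - i)" using assms(2) by auto
  qed
  finally show ?thesis .
qed

lemma r_min_pos: "0 < r_min p s d P Q \<tau>"
  using plen_pos pheromone_pos[OF source_edge] pheromone_pos[OF swapped.source_edge]
    pheromone_pos[OF sink_edge] pheromone_pos[OF swapped.sink_edge]
  unfolding r_min_def Let_def by (subst Min_gr_iff) (auto simp: lessThan_empty_iff)

lemma pheromone_ratio_gain:
  assumes "plen P < plen Q" "plen Q - 1 \<le> \<tau>" "0 < \<rho>"
    and init: "\<And>u v. (u, v) \<in> E \<Longrightarrow> \<delta>^\<tau> * p 0 u v \<le> f 0 s + b 0 d"
    and ratios: "ratio_at_least \<rho> \<tau>" "ratio_at_least \<rho> (\<tau> - (plen P - 1))"
      "ratio_at_least \<rho> (\<tau> - (plen Q - 1))"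
  shows "ratio_at_least (\<rho> * (1 + \<alpha> * (1 - \<delta>) / (5 * (f \<tau> s + b \<tau> d)))) (Suc \<tau>)"
proof -
  have gain_le: "\<rho> * (1 + \<alpha> * (1 - \<delta>) / (5 * (f \<tau> s + b \<tau> d))) \<le> \<rho> * (1 + \<alpha> / W)"
    if "W \<le> 5 * (f \<tau> s + b \<tau> d) / (1 - \<delta>)" "0 < W" for W
  proof -
    have "\<alpha> * (1 - \<delta>) / (5 * (f \<tau> s + b \<tau> d)) = \<alpha> / (5 * (f \<tau> s + b \<tau> d) / (1 - \<delta>))"
      using decay by simp
    also have "\<dots> \<le> \<alpha> / W"
      using that rate decay source_input_pos[of \<tau>] sink_input_pos[of \<tau>]
      by (intro divide_left_mono) (auto intro!: mult_pos_pos divide_pos_pos)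
    finally show ?thesis using \<open>0 < \<rho>\<close> by simp
  qed
  have W_pos: "0 < out_sum E (p \<tau>) s + f \<tau> s + b \<tau> d" "0 < in_sum E (p \<tau>) d + f \<tau> s + b \<tau> d"
    using pheromone_pos[OF source_edge] pheromone_pos[OF swapped.source_edge]
      pheromone_pos[OF sink_edge] pheromone_pos[OF swapped.sink_edge]
      source_input_pos[of \<tau>] sink_input_pos[of \<tau>]
    by (simp_all add: out_sum_source in_sum_sink add_pos_pos)
  have "\<rho> * (1 + \<alpha> / (out_sum E (p \<tau>) s + f \<tau> s + b \<tau> d)) * p (Suc \<tau>) s (succ_s Q)
      \<le> p (Suc \<tau>) s (succ_s P)"
    using ratios by (intro source_ratio_gain[OF assms(1-3)]) (auto simp: ratio_at_least_def)
  moreover have "\<rho> * (1 + \<alpha> / (in_sum E (p \<tau>) d + f \<tau> s + b \<tau> d)) * p (Suc \<tau>) (pred_d Q) d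
      \<le> p (Suc \<tau>) (pred_d P) d"
    using ratios by (intro sink_ratio_gain[OF assms(1-3)]) (auto simp: ratio_at_least_def)
  moreover have "\<rho> * (1 + \<alpha> * (1 - \<delta>) / (5 * (f \<tau> s + b \<tau> d))) * p (Suc \<tau>) s (succ_s Q)
      \<le> \<rho> * (1 + \<alpha> / (out_sum E (p \<tau>) s + f \<tau> s + b \<tau> d)) * p (Suc \<tau>) s (succ_s Q)"
    by (intro mult_right_mono gain_le[OF source_load_bound[OF init] W_pos(1)]
        less_imp_le[OF pheromone_pos[OF swapped.source_edge]])
  moreover have "\<rho> * (1 + \<alpha> * (1 - \<delta>) / (5 * (f \<tau> s + b \<tau> d))) * p (Suc \<tau>) (pred_d Q) d
      \<le> \<rho> * (1 + \<alpha> / (in_sum E (p \<tau>) d + f \<tau> s + b \<tau> d)) * p (Suc \<tau>) (pred_d Q) d"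
    by (intro mult_right_mono gain_le[OF sink_load_bound[OF init] W_pos(2)]
        less_imp_le[OF pheromone_pos[OF swapped.sink_edge]])
  ultimately show ?thesis unfolding ratio_at_least_def by linarith
qed

lemma r_min_gain:
  assumes "plen P < plen Q" "plen Q \<le> t"
    and init: "\<And>u v. (u, v) \<in> E \<Longrightarrow> \<delta>^t * p 0 u v \<le> f 0 s + b 0 d"
  shows "(1 + \<alpha> * (1 - \<delta>) / (6 * (f 0 s + b 0 d + 2 * \<alpha> * real (plen Q) + 2 * \<alpha> * real t)))
      * r_min p s d P Q t \<le> r_min p s d P Q (t + plen Q)"
proof -
  define n where "n = plen Q"
  define K where "K = f (t + n) s + b (t + n) d"
  define g where "g = 1 + \<alpha> * (1 - \<delta>) / (6 * K)"
  define \<rho> where "\<rho> = r_min p s d P Q t"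
  have "0 < \<rho>" using r_min_pos by (simp add: \<rho>_def)
  have "0 < K" using source_input_pos sink_input_pos by (simp add: K_def add_pos_pos)
  then have "1 \<le> g" using rate decay by (simp add: g_def)
  have window: "ratio_at_least \<rho> j" if "t - n < j" "j \<le> t" for j
    using le_r_min_iff[of t \<rho>] assms(1,2) that by (simp add: \<rho>_def n_def)
  have step: "ratio_at_least (g * \<rho>) (Suc \<tau>)"
    if \<tau>: "t \<le> \<tau>" "\<tau> < t + n" and IH: "\<And>j. t - n < j \<Longrightarrow> j \<le> \<tau> \<Longrightarrow> ratio_at_least \<rho> j" for \<tau>
  proof -
    have "\<delta>^\<tau> * p 0 u v \<le> f 0 s + b 0 d" if "(u, v) \<in> E" for u v
    proof -
      have "\<delta>^\<tau> \<le> \<delta>^t" using decay \<tau>(1) by (simp add: power_decreasing)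
      then have "\<delta>^\<tau> * p 0 u v \<le> \<delta>^t * p 0 u v" using pheromone_pos[OF that] by simp
      then show ?thesis using init[OF that] by linarith
    qed
    moreover have "ratio_at_least \<rho> \<tau>" "ratio_at_least \<rho> (\<tau> - (plen P - 1))"
      "ratio_at_least \<rho> (\<tau> - (plen Q - 1))"
      using IH \<tau> assms(1,2) plen_pos by (simp_all add: n_def)
    ultimately have gain: "ratio_at_least (\<rho> * (1 + \<alpha> * (1 - \<delta>) / (5 * (f \<tau> s + b \<tau> d)))) (Suc \<tau>)"
      using pheromone_ratio_gain[OF assms(1) _ \<open>0 < \<rho>\<close>] \<tau> assms(2) by (simp add: n_def)
    have "f \<tau> s + b \<tau> d \<le> K" using input_mono[of \<tau> "t + n"] \<tau>(2) by (simp add: K_def)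
    then have "5 * (f \<tau> s + b \<tau> d) \<le> 6 * K" using \<open>0 < K\<close> by simp
    then have "\<alpha> * (1 - \<delta>) / (6 * K) \<le> \<alpha> * (1 - \<delta>) / (5 * (f \<tau> s + b \<tau> d))"
      using rate decay source_input_pos[of \<tau>] sink_input_pos[of \<tau>]
      by (intro divide_left_mono) auto
    then have "g * \<rho> \<le> \<rho> * (1 + \<alpha> * (1 - \<delta>) / (5 * (f \<tau> s + b \<tau> d)))"
      using \<open>0 < \<rho>\<close> unfolding g_def by (subst mult.commute) (intro mult_left_mono; simp)
    then show ?thesis using gain ratio_at_least_mono by blast
  qed
  have weaken: "ratio_at_least \<rho> j" if "ratio_at_least (g * \<rho>) j" for j
    using \<open>1 \<le> g\<close> \<open>0 < \<rho>\<close> by (intro ratio_at_least_mono[OF that]) simp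
  have "ratio_at_least (g * \<rho>) j" if "t < j" "j \<le> t + n" for j
    by (rule window_induct[of t n "ratio_at_least \<rho>" "ratio_at_least (g * \<rho>)" j,
          OF window step weaken that])
  then have "g * \<rho> \<le> r_min p s d P Q (t + n)"
    using le_r_min_iff[of "t + n" "g * \<rho>"] assms(1) by (simp add: n_def)
  moreover have "K = f 0 s + b 0 d + 2 * \<alpha> * real (plen Q) + 2 * \<alpha> * real t"
    using source_input[of "t + n"] sink_input[of "t + n"] by (simp add: K_def n_def algebra_simps)
  ultimately show ?thesis by (simp add: g_def \<rho>_def n_def)
qed

end

theorem mainTheorem15:
  fixes E :: "('v \<times> 'v) set" and s d :: 'v and P1 P2 :: "'v list"
    and l :: "'v \<Rightarrow> real" and \<delta> \<alpha> :: real
    and f b :: "nat \<Rightarrow> 'v \<Rightarrow> real" and p :: "nat \<Rightarrow> 'v \<Rightarrow> 'v \<Rightarrow> real"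
    and t :: nat
  assumes G: "two_parallel_paths E s d P1 P2"
    and dyn: "ant_dynamics E s d l \<delta> f b p"
    and delta: "0 < \<delta>" "\<delta> < 1"
    and leak: "\<forall>v. l v = 0"
    and mn: "plen P1 < plen P2"
    and p0: "\<forall>(u, v)\<in>E. 0 < p 0 u v"
    and alpha: "0 < \<alpha>"
    and fs0: "0 < f 0 s" and bd0: "0 < b 0 d"
    and fs: "\<forall>t. f t s = f 0 s + \<alpha> * real t"
    and bd: "\<forall>t. b t d = b 0 d + \<alpha> * real t"
    and finit: "\<forall>v\<in>(set P1 \<union> set P2) - {s, d}. 0 \<le> f 0 v \<and> f 0 v \<le> f 0 s"
    and binit: "\<forall>v\<in>(set P1 \<union> set P2) - {s, d}. 0 \<le> b 0 v \<and> b 0 v \<le> b 0 d"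
    and tL: "real t \<ge> real (max (plen P1) (plen P2)) +
               max 0 (Max ((\<lambda>(u, v). ln (p 0 u v / (f 0 s + b 0 d)) / ln (1 / \<delta>)) ` E))"
  shows "r_min p s d P1 P2 (t + max (plen P1) (plen P2)) \<ge>
           (1 + \<alpha> * (1 - \<delta>) / (6 * (f 0 s + b 0 d + 2 * \<alpha> * real (max (plen P1) (plen P2))
                                     + 2 * \<alpha> * real t))) * r_min p s d P1 P2 t"
proof -
  interpret ant_colony E s d P1 P2 \<delta> \<alpha> f b p
  proof (intro ant_colony.intro ant_colony_axioms.intro parallel_paths.intro)
    have "l = (\<lambda>_. 0)" using leak by auto
    then show "ant_dynamics E s d (\<lambda>_. 0) \<delta> f b p" using dyn by simp
    show "\<And>t. f t s = f 0 s + \<alpha> * real t" "\<And>t. b t d = b 0 d + \<alpha> * real t"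
      using fs bd by blast+
  qed (use G delta alpha p0 fs0 bd0 finit binit mn in \<open>auto simp: plen_def\<close>)
  have L: "max (plen P1) (plen P2) = plen P2" using mn by simp
  have "plen P2 \<le> t" using tL L by simp
  moreover have "\<delta>^t * p 0 u v \<le> f 0 s + b 0 d" if "(u, v) \<in> E" for u v
  proof (rule decayed_below[OF delta pheromone_pos[OF that] add_pos_pos[OF fs0 bd0]])
    have "ln (p 0 u v / (f 0 s + b 0 d)) / ln (1 / \<delta>)
        \<le> Max ((\<lambda>(u, v). ln (p 0 u v / (f 0 s + b 0 d)) / ln (1 / \<delta>)) ` E)"
      using that finite_edges by (intro Max_ge) auto
    then show "ln (p 0 u v / (f 0 s + b 0 d)) / ln (1 / \<delta>) \<le> real t" using tL by linarith
  qed
  ultimately show ?thesis unfolding L using r_min_gain[OF mn] by blast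
qed

end
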